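(* Let $u\in(0,1)$ and $\mathscr{C}_n^u:=F^{-(n-1)}[u,1]$ for $n\ge1$. Then the sequence $(\lambda(\mathscr{C}_n^u))_{n\ge1}$ is decreasing.
   Context: $\lambda$ denotes Lebesgue measure on $[0,1]$. $F:[0,1]\to[0,1]$ is the Farey map, $F(x)=x/(1-x)$ for $0\le x\le 1/2$ and $F(x)=(1-x)/x$ for $1/2<x\le 1$; $F^{-k}$ denotes preimage under the $k$-th iterate. *)

theory Defs
  imports "HOL-Analysis.Analysis"
begin

definition farey :: "real \<Rightarrow> real" where
  "farey x = (if x \<le> 1/2 then x / (1 - x) else (1 - x) / x)"

definition farey_C :: "real \<Rightarrow> nat \<Rightarrow> real set" where
  "farey_C u n = {x \<in> {0..1}. (farey ^^ (n - 1)) x \<in> {u..1}}"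

end

theory Submission
  imports Defs
begin

text \<open>
  Push Lebesgue measure forward under \<open>F\<^sup>k\<close>: on \<open>(0,1]\<close> its distribution function \<open>H\<^sub>k\<close>
  satisfies \<open>H\<^sub>k\<^sub>+\<^sub>1(x) = H\<^sub>k(x/(1+x)) - H\<^sub>k(1/(1+x))\<close>, the two inverse branches of \<open>F\<close>,
  and \<open>H\<^sub>k' = m\<^sub>k(x)/x\<close> where \<open>m\<^sub>k\<close> is \<open>x\<close> times the density.  The transfer operator
  preserves the property that \<open>m\<^sub>k\<close> is nondecreasing and concave.  Now
  \<open>\<lambda>(C\<^sub>k\<^sub>+\<^sub>2) = H\<^sub>k(1/(1+u)) - H\<^sub>k(u/(1+u))\<close> and \<open>\<lambda>(C\<^sub>k\<^sub>+\<^sub>1) = H\<^sub>k(1) - H\<^sub>k(u)\<close>, so the claim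
  amounts to \<open>H\<^sub>k(u) - H\<^sub>k(u/(1+u)) \<le> H\<^sub>k(1) - H\<^sub>k(1/(1+u))\<close>: the right-hand side is the
  left-hand increment dilated by \<open>1/u\<close>, and dilation can only increase
  \<open>\<integral> m\<^sub>k(x)/x dx\<close> when \<open>m\<^sub>k\<close> is nondecreasing.
\<close>

fun farey_cdf :: "nat \<Rightarrow> real \<Rightarrow> real" where
  "farey_cdf 0 x = x"
| "farey_cdf (Suc k) x = farey_cdf k (x/(1+x)) - farey_cdf k (1/(1+x))"

fun farey_xdens :: "nat \<Rightarrow> real \<Rightarrow> real" where
  "farey_xdens 0 x = x"
| "farey_xdens (Suc k) x =
     (1/(1+x)) * farey_xdens k (x/(1+x)) + (x/(1+x)) * farey_xdens k (1/(1+x))"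

fun farey_xdens_deriv :: "nat \<Rightarrow> real \<Rightarrow> real" where
  "farey_xdens_deriv 0 x = 1"
| "farey_xdens_deriv (Suc k) x =
     (farey_xdens k (1/(1+x)) - farey_xdens k (x/(1+x))) / (1+x)^2
     + farey_xdens_deriv k (x/(1+x)) / (1+x)^3 - x * farey_xdens_deriv k (1/(1+x)) / (1+x)^3"

lemma has_real_derivative_branches:
  assumes "0 < x"
  shows "((\<lambda>x. x/(1+x)) has_real_derivative 1/(1+x)^2) (at x)"
    and "((\<lambda>x. 1/(1+x)) has_real_derivative -1/(1+x)^2) (at x)"
  using assms by (auto intro!: derivative_eq_intros simp: field_simps power2_eq_square)

lemma has_real_derivative_farey_xdens:
  "0 < x \<Longrightarrow> (farey_xdens k has_real_derivative farey_xdens_deriv k x) (at x)"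
proof (induction k arbitrary: x)
  case 0
  then show ?case by (auto intro!: derivative_eq_intros)
next
  case (Suc k)
  let ?m = "farey_xdens k" and ?d = "farey_xdens_deriv k"
  have "0 < x/(1+x)" "0 < 1/(1+x)" using Suc.prems by auto
  note lo = DERIV_chain2[OF Suc.IH[OF this(1)] has_real_derivative_branches(1)[OF Suc.prems]]
   and hi = DERIV_chain2[OF Suc.IH[OF this(2)] has_real_derivative_branches(2)[OF Suc.prems]]
  have "((\<lambda>x. (1/(1+x)) * ?m (x/(1+x)) + (x/(1+x)) * ?m (1/(1+x))) has_real_derivative
      (-1/(1+x)^2) * ?m (x/(1+x)) + (?d (x/(1+x)) * (1/(1+x)^2)) * (1/(1+x))
      + (1/(1+x)^2) * ?m (1/(1+x)) + (?d (1/(1+x)) * (-1/(1+x)^2)) * (x/(1+x))) (at x)"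
    using DERIV_add[OF DERIV_mult[OF has_real_derivative_branches(2) lo]
                       DERIV_mult[OF has_real_derivative_branches(1) hi]] Suc.prems
    by (simp only: add.assoc)
  moreover have "(-1/(1+x)^2) * ?m (x/(1+x)) + (?d (x/(1+x)) * (1/(1+x)^2)) * (1/(1+x))
      + (1/(1+x)^2) * ?m (1/(1+x)) + (?d (1/(1+x)) * (-1/(1+x)^2)) * (x/(1+x))
      = farey_xdens_deriv (Suc k) x"
    using Suc.prems
    by (simp add: divide_simps power2_eq_square power3_eq_cube) (simp add: algebra_simps)
  ultimately show ?case by (simp add: fun_eq_iff)
qed

lemma has_real_derivative_farey_cdf:
  "0 < x \<Longrightarrow> (farey_cdf k has_real_derivative farey_xdens k x / x) (at x)"
proof (induction k arbitrary: x)
  case 0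
  then show ?case by (auto intro!: derivative_eq_intros)
next
  case (Suc k)
  let ?m = "farey_xdens k"
  have "0 < x/(1+x)" "0 < 1/(1+x)" using Suc.prems by auto
  note lo = DERIV_chain2[OF Suc.IH[OF this(1)] has_real_derivative_branches(1)[OF Suc.prems]]
   and hi = DERIV_chain2[OF Suc.IH[OF this(2)] has_real_derivative_branches(2)[OF Suc.prems]]
  have "?m (x/(1+x)) / (x/(1+x)) * (1/(1+x)^2) - ?m (1/(1+x)) / (1/(1+x)) * (-1/(1+x)^2)
      = farey_xdens (Suc k) x / x"
    using Suc.prems by (simp add: divide_simps power2_eq_square)
  with DERIV_diff[OF lo hi] show ?case by (simp add: fun_eq_iff)
qed

lemma farey_xdens_mono_of_deriv_nonneg:
  assumes "\<And>t. 0 < t \<Longrightarrow> t \<le> 1 \<Longrightarrow> 0 \<le> farey_xdens_deriv k t" "0 < s" "s \<le> t" "t \<le> 1"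
  shows "farey_xdens k s \<le> farey_xdens k t"
  by (rule DERIV_nonneg_imp_nondecreasing[OF \<open>s \<le> t\<close>])
     (use assms has_real_derivative_farey_xdens in force)

text \<open>
  With \<open>y = x/(1+x)\<close> one has \<open>1/(1+x) = 1 - y\<close>, so the reflection \<open>y \<mapsto> 1 - y\<close>
  exchanges the two inverse branches of \<open>F\<close>.
\<close>
definition reflected_slope :: "(real \<Rightarrow> real) \<Rightarrow> (real \<Rightarrow> real) \<Rightarrow> real \<Rightarrow> real" where
  "reflected_slope m d y = (m (1-y) - m y) + (1-y) * d y - y * d (1-y)"

lemma farey_xdens_deriv_Suc_eq_reflected_slope:
  assumes "-1 < x"
  shows "farey_xdens_deriv (Suc k) x
    = (1 - x/(1+x))^2 * reflected_slope (farey_xdens k) (farey_xdens_deriv k) (x/(1+x))"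
proof -
  have branch: "1 - x/(1+x) = 1/(1+x)" using assms by (simp add: field_simps)
  show ?thesis unfolding reflected_slope_def branch using assms
    by (simp add: divide_simps power2_eq_square power3_eq_cube)
qed

lemma reflected_slope_nonneg_antitone:
  fixes m d :: "real \<Rightarrow> real"
  assumes d_nonneg: "\<And>t. 0 < t \<Longrightarrow> t \<le> 1 \<Longrightarrow> 0 \<le> d t"
    and d_antitone: "\<And>s t. 0 < s \<Longrightarrow> s \<le> t \<Longrightarrow> t \<le> 1 \<Longrightarrow> d t \<le> d s"
    and m_mono: "\<And>s t. 0 < s \<Longrightarrow> s \<le> t \<Longrightarrow> t \<le> 1 \<Longrightarrow> m s \<le> m t"
    and yz: "0 < y" "y \<le> z" "z \<le> 1/2"
  shows "0 \<le> reflected_slope m d z" "reflected_slope m d z \<le> reflected_slope m d y"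
proof -
  have "m z \<le> m (1-z)" using m_mono[of z "1-z"] yz by auto
  moreover have "z * d (1-z) \<le> (1-z) * d z"
    using yz d_nonneg[of "1-z"] d_nonneg[of z] d_antitone[of z "1-z"] by (intro mult_mono) auto
  ultimately show "0 \<le> reflected_slope m d z" unfolding reflected_slope_def by linarith
  have "m (1-z) \<le> m (1-y)" "m y \<le> m z" using m_mono[of "1-z" "1-y"] m_mono[of y z] yz by auto
  moreover have "(1-z) * d z \<le> (1-y) * d y"
    using yz d_nonneg[of z] d_antitone[of y z] by (intro mult_mono) auto
  moreover have "y * d (1-y) \<le> z * d (1-z)"
    using yz d_nonneg[of "1-y"] d_antitone[of "1-z" "1-y"] by (intro mult_mono) auto
  ultimately show "reflected_slope m d z \<le> reflected_slope m d y"
    unfolding reflected_slope_def by linarith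
qed

lemma farey_xdens_deriv_nonneg_antitone:
  "(\<forall>t. 0 < t \<and> t \<le> 1 \<longrightarrow> 0 \<le> farey_xdens_deriv k t) \<and>
   (\<forall>s t. 0 < s \<and> s \<le> t \<and> t \<le> 1 \<longrightarrow> farey_xdens_deriv k t \<le> farey_xdens_deriv k s)"
proof (induction k)
  case 0
  then show ?case by simp
next
  case (Suc k)
  have d_nonneg: "\<And>t. 0 < t \<Longrightarrow> t \<le> 1 \<Longrightarrow> 0 \<le> farey_xdens_deriv k t"
    and d_antitone: "\<And>s t. 0 < s \<Longrightarrow> s \<le> t \<Longrightarrow> t \<le> 1 \<Longrightarrow> farey_xdens_deriv k t \<le> farey_xdens_deriv k s"
    using Suc.IH by blast+
  then have "\<And>s t. 0 < s \<Longrightarrow> s \<le> t \<Longrightarrow> t \<le> 1 \<Longrightarrow> farey_xdens k s \<le> farey_xdens k t"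
    using farey_xdens_mono_of_deriv_nonneg by blast
  note slope = reflected_slope_nonneg_antitone[OF d_nonneg d_antitone this]
  let ?S = "reflected_slope (farey_xdens k) (farey_xdens_deriv k)"
  have branch: "0 < x/(1+x)" "x/(1+x) \<le> 1/2" "0 \<le> 1 - x/(1+x)" if "0 < x" "x \<le> 1" for x :: real
    using that by (auto simp: field_simps)
  show ?case
  proof (intro conjI allI impI)
    fix t :: real assume t: "0 < t \<and> t \<le> 1"
    with branch[of t] slope(1)[where y="t/(1+t)" and z="t/(1+t)"] have "0 \<le> ?S (t/(1+t))" by auto
    then show "0 \<le> farey_xdens_deriv (Suc k) t"
      using t by (subst farey_xdens_deriv_Suc_eq_reflected_slope) auto
  next
    fix s t :: real assume st: "0 < s \<and> s \<le> t \<and> t \<le> 1"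
    then have "s/(1+s) \<le> t/(1+t)" by (auto simp: field_simps)
    with st branch[of s] branch[of t] slope[where y="s/(1+s)" and z="t/(1+t)"]
    have "0 \<le> ?S (t/(1+t))" "?S (t/(1+t)) \<le> ?S (s/(1+s))" by auto
    moreover have "(1 - t/(1+t))^2 \<le> (1 - s/(1+s))^2"
      using st branch[of t] \<open>s/(1+s) \<le> t/(1+t)\<close> by (intro power_mono) auto
    ultimately have "(1 - t/(1+t))^2 * ?S (t/(1+t)) \<le> (1 - s/(1+s))^2 * ?S (s/(1+s))"
      using branch[of s] st by (intro mult_mono) auto
    moreover have "-1 < s" "-1 < t" using st by auto
    ultimately show "farey_xdens_deriv (Suc k) t \<le> farey_xdens_deriv (Suc k) s"
      by (simp only: farey_xdens_deriv_Suc_eq_reflected_slope)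
  qed
qed

lemma farey_xdens_mono:
  "0 < s \<Longrightarrow> s \<le> t \<Longrightarrow> t \<le> 1 \<Longrightarrow> farey_xdens k s \<le> farey_xdens k t"
  using farey_xdens_mono_of_deriv_nonneg farey_xdens_deriv_nonneg_antitone by blast

lemma dilated_increment_mono:
  fixes H m :: "real \<Rightarrow> real"
  assumes H_deriv: "\<And>x. 0 < x \<Longrightarrow> (H has_real_derivative m x / x) (at x)"
    and m_mono: "\<And>s t. 0 < s \<Longrightarrow> s \<le> t \<Longrightarrow> t \<le> 1 \<Longrightarrow> m s \<le> m t"
    and "0 < x" "x \<le> y" "1 \<le> c" "c * y \<le> 1"
  shows "H y - H x \<le> H (c*y) - H (c*x)"
proof -
  have "(\<lambda>b. H (b*y) - H (b*x)) 1 \<le> (\<lambda>b. H (b*y) - H (b*x)) c"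
  proof (rule DERIV_nonneg_imp_nondecreasing[OF \<open>1 \<le> c\<close>])
    fix b assume b: "1 \<le> b" "b \<le> c"
    have pos: "0 < b*y" "0 < b*x" using b assms by auto
    have "b*y \<le> c*y" using b assms by (intro mult_right_mono) auto
    then have "b*y \<le> 1" using assms by linarith
    then have "m (b*x) \<le> m (b*y)" using b assms pos by (intro m_mono) auto
    then have "0 \<le> m (b*y)/(b*y) * y - m (b*x)/(b*x) * x" using pos b assms by (simp add: divide_simps)
    moreover have "((\<lambda>b. H (b*y) - H (b*x)) has_real_derivative
        m (b*y)/(b*y) * y - m (b*x)/(b*x) * x) (at b)"
      by (rule DERIV_diff; rule DERIV_chain2[OF H_deriv])
         (use pos in \<open>auto intro!: derivative_eq_intros\<close>)
    ultimately show "\<exists>D. ((\<lambda>b. H (b*y) - H (b*x)) has_real_derivative D) (at b) \<and> 0 \<le> D"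
      by blast
  qed
  then show ?thesis by simp
qed

lemma farey_in_unit_interval: "x \<in> {0..1} \<Longrightarrow> farey x \<in> {0..1}"
  by (auto simp: farey_def field_simps)

lemma farey_iter_in_unit_interval: "x \<in> {0..1} \<Longrightarrow> (farey^^k) x \<in> {0..1}"
proof (induction k)
  case (Suc k)
  then show ?case using farey_in_unit_interval[OF Suc.IH[OF Suc.prems]] by simp
qed simp

lemma borel_measurable_farey_iter[measurable]: "(farey^^k) \<in> borel_measurable borel"
proof -
  have "farey \<in> borel_measurable borel" unfolding farey_def by measurable
  then show ?thesis by (induction k) (auto intro: measurable_compose)
qed

lemma farey_preimage_sets: "{x\<in>{0..1}. (farey^^k) x \<in> {s..t}} \<in> sets lborel"
  by measurable

lemma farey_preimage_fmeasurable: "{x\<in>{0..1}. (farey^^k) x \<in> {s..t}} \<in> fmeasurable lborel"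
  by (rule fmeasurableI2[of "{0..1}"]) (auto intro!: fmeasurableI farey_preimage_sets)

lemma farey_eq_imp_branch:
  assumes "y \<in> {0..1}" "farey y = b"
  shows "y = b/(1+b) \<or> y = 1/(1+b)"
proof (cases "y \<le> 1/2")
  case True
  then have "b = y/(1-y)" using assms by (simp add: farey_def)
  then have "y*(1+b) = b" using True by (simp add: field_simps)
  moreover have "0 \<le> b" using \<open>b = y/(1-y)\<close> True assms by simp
  then have "1 + b \<noteq> 0" by simp
  ultimately show ?thesis by (simp add: eq_divide_eq)
next
  case False
  then have "b = (1-y)/y" using assms by (simp add: farey_def)
  then have "y*(1+b) = 1" using False by (simp add: field_simps)
  moreover have "0 \<le> b" using \<open>b = (1-y)/y\<close> False assms by simp
  then have "1 + b \<noteq> 0" by simp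
  ultimately show ?thesis by (simp add: eq_divide_eq)
qed

lemma finite_farey_iter_fibre: "finite {x\<in>{0..1::real}. (farey^^k) x = b}"
proof (induction k arbitrary: b)
  case 0
  have "{x\<in>{0..1::real}. (farey^^0) x = b} \<subseteq> {b}" by auto
  then show ?case using finite_subset by blast
next
  case (Suc k)
  have "{x\<in>{0..1::real}. (farey^^Suc k) x = b} \<subseteq>
     {x\<in>{0..1}. (farey^^k) x = b/(1+b)} \<union> {x\<in>{0..1}. (farey^^k) x = 1/(1+b)}"
    using farey_eq_imp_branch farey_iter_in_unit_interval by fastforce
  then show ?case using Suc.IH finite_subset by (meson finite_UnI)
qed

lemma farey_in_interval_iff:
  assumes "y \<in> {0..1}" "0 \<le> s" "s \<le> t" "t \<le> 1"
  shows "farey y \<in> {s..t} \<longleftrightarrow> y \<in> {s/(1+s)..t/(1+t)} \<or> y \<in> {1/(1+t)..1/(1+s)}"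
proof -
  have h1: "t/(1+t) \<le> 1/2" "s/(1+s) \<le> 1/2" "1/2 \<le> 1/(1+t)" "1/2 \<le> 1/(1+s)"
    using assms by (auto simp: field_simps)
  consider "y < 1/2" | "y = 1/2" | "y > 1/2" by linarith
  then show ?thesis
  proof cases
    case 1
    then have "y < 1/(1+t)" using h1 by linarith
    then have "\<not> y \<in> {1/(1+t)..1/(1+s)}" by auto
    moreover have "farey y \<in> {s..t} \<longleftrightarrow> y \<in> {s/(1+s)..t/(1+t)}"
      using 1 assms by (auto simp: farey_def field_simps)
    ultimately show ?thesis by blast
  next
    case 2
    have "farey y = 1" using 2 by (simp add: farey_def)
    moreover have "1/2 \<le> t/(1+t) \<longleftrightarrow> t = 1" using assms by (auto simp: field_simps)
    moreover have "1/(1+t) \<le> 1/2 \<longleftrightarrow> t = 1" using assms by (auto simp: field_simps)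
    ultimately show ?thesis unfolding 2 using assms h1 by auto
  next
    case 3
    then have "t/(1+t) < y" using h1 by linarith
    then have "\<not> y \<in> {s/(1+s)..t/(1+t)}" by auto
    moreover have "farey y \<in> {s..t} \<longleftrightarrow> y \<in> {1/(1+t)..1/(1+s)}"
      using 3 assms by (auto simp: farey_def field_simps)
    ultimately show ?thesis by blast
  qed
qed

text \<open>The two branch preimages can only overlap in the finite fibre over \<open>1/2\<close>.\<close>
lemma measure_farey_preimage_interval:
  "0 \<le> s \<Longrightarrow> s \<le> t \<Longrightarrow> t \<le> 1 \<Longrightarrow>
   measure lborel {x\<in>{0..1}. (farey^^k) x \<in> {s..t}} = farey_cdf k t - farey_cdf k s"
proof (induction k arbitrary: s t)
  case 0
  then have "{x\<in>{0..1::real}. (farey^^0) x \<in> {s..t}} = {s..t}" by auto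
  then show ?case using 0 by simp
next
  case (Suc k)
  define E1 where "E1 = {x\<in>{0..1::real}. (farey^^k) x \<in> {s/(1+s)..t/(1+t)}}"
  define E2 where "E2 = {x\<in>{0..1::real}. (farey^^k) x \<in> {1/(1+t)..1/(1+s)}}"
  have split: "{x\<in>{0..1}. (farey^^Suc k) x \<in> {s..t}} = E1 \<union> E2"
    unfolding E1_def E2_def using farey_in_interval_iff[OF farey_iter_in_unit_interval] Suc.prems
    by auto
  have half: "t/(1+t) \<le> 1/2" "1/2 \<le> 1/(1+t)" using Suc.prems by (auto simp: field_simps)
  have overlap: "E1 \<inter> E2 \<subseteq> {x\<in>{0..1}. (farey^^k) x = 1/2}"
  proof
    fix x assume "x \<in> E1 \<inter> E2"
    then have "x \<in> {0..1}" "(farey^^k) x \<le> t/(1+t)" "1/(1+t) \<le> (farey^^k) x"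
      unfolding E1_def E2_def by auto
    moreover from this(2,3) half have "(farey^^k) x = 1/2" by linarith
    ultimately show "x \<in> {x\<in>{0..1}. (farey^^k) x = 1/2}" by simp
  qed
  have null: "E1 \<inter> E2 \<in> null_sets lborel"
    by (rule null_sets_subset[OF finite_imp_null_set_lborel[OF finite_farey_iter_fibre] _ overlap])
       (unfold E1_def E2_def, intro sets.Int farey_preimage_sets)
  have "measure lborel (E1 \<union> E2)
      = measure lborel E1 + measure lborel E2 - measure lborel (E1 \<inter> E2)"
    unfolding E1_def E2_def by (rule measure_Un3) (rule farey_preimage_fmeasurable)+
  also have "measure lborel (E1 \<inter> E2) = 0" using null by (rule measure_eq_0_null_sets)
  also have "measure lborel E1 = farey_cdf k (t/(1+t)) - farey_cdf k (s/(1+s))"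
    unfolding E1_def using Suc.prems by (intro Suc.IH) (auto simp: field_simps)
  also have "measure lborel E2 = farey_cdf k (1/(1+s)) - farey_cdf k (1/(1+t))"
    unfolding E2_def using Suc.prems by (intro Suc.IH) (auto simp: field_simps)
  finally show ?case using split by simp
qed

theorem theorem2:
  fixes u :: real
  assumes "0 < u" and "u < 1"
  shows "\<forall>n\<ge>1. measure lborel (farey_C u (Suc n)) \<le> measure lborel (farey_C u n)"
proof (intro allI impI)
  fix n :: nat assume "n \<ge> 1"
  then obtain k where k: "n = Suc k" by (cases n) auto
  have "measure lborel (farey_C u (Suc n)) = farey_cdf k (1/(1+u)) - farey_cdf k (u/(1+u))"
    unfolding farey_C_def k diff_Suc_1 using assms
    by (subst measure_farey_preimage_interval) auto
  moreover have "measure lborel (farey_C u n) = farey_cdf k 1 - farey_cdf k u"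
    unfolding farey_C_def k diff_Suc_1 using assms by (intro measure_farey_preimage_interval) auto
  moreover have "farey_cdf k u - farey_cdf k (u/(1+u))
      \<le> farey_cdf k ((1/u)*u) - farey_cdf k ((1/u)*(u/(1+u)))"
    using assms
    by (intro dilated_increment_mono[OF has_real_derivative_farey_cdf farey_xdens_mono])
       (auto simp: field_simps)
  moreover have "(1/u)*u = 1" "(1/u)*(u/(1+u)) = 1/(1+u)" using assms by auto
  ultimately show "measure lborel (farey_C u (Suc n)) \<le> measure lborel (farey_C u n)"
    by simp
qed

end
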